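(* Let $k$ be a positive integer and let $G$ be the union of a set $\mathcal L$ of $k$ pairwise edge-disjoint complete subgraphs, each with $k$ vertices (so $V(G)=\bigcup_{L\in\mathcal L}V(L)$ and $E(G)=\bigcup_{L\in\mathcal L}E(L)$). Then $\omega(G)=k$. Furthermore, if $G$ has a maximal clique of size $k$ whose vertex set is not the vertex set of a member of $\mathcal L$, then $G$ is chordal.
   Context: All graphs are finite and simple; $\omega$ is the clique number. A graph is chordal if it has no induced cycle of length at least $4$. *)

theory Defs
  imports Main
begin

text \<open>A simple graph is given by a vertex set V and a symmetric irreflexive
adjacency relation E (only its restriction to V matters).\<close>

definition is_clique :: "'a set \<Rightarrow> ('a \<Rightarrow> 'a \<Rightarrow> bool) \<Rightarrow> 'a set \<Rightarrow> bool" where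
  "is_clique V E C \<longleftrightarrow> C \<subseteq> V \<and> (\<forall>u\<in>C. \<forall>v\<in>C. u \<noteq> v \<longrightarrow> E u v)"

definition is_maximal_clique :: "'a set \<Rightarrow> ('a \<Rightarrow> 'a \<Rightarrow> bool) \<Rightarrow> 'a set \<Rightarrow> bool" where
  "is_maximal_clique V E C \<longleftrightarrow> is_clique V E C \<and> (\<forall>D. is_clique V E D \<and> C \<subseteq> D \<longrightarrow> D = C)"

definition clique_number :: "'a set \<Rightarrow> ('a \<Rightarrow> 'a \<Rightarrow> bool) \<Rightarrow> nat" where
  "clique_number V E = Max (card ` {C. is_clique V E C})"

definition induced_cycle :: "'a set \<Rightarrow> ('a \<Rightarrow> 'a \<Rightarrow> bool) \<Rightarrow> nat \<Rightarrow> (nat \<Rightarrow> 'a) \<Rightarrow> bool" where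
  "induced_cycle V E n f \<longleftrightarrow> inj_on f {..<n} \<and> f ` {..<n} \<subseteq> V \<and>
     (\<forall>i<n. \<forall>j<n. i \<noteq> j \<longrightarrow> (E (f i) (f j) \<longleftrightarrow> (j = Suc i mod n \<or> i = Suc j mod n)))"

definition chordal :: "'a set \<Rightarrow> ('a \<Rightarrow> 'a \<Rightarrow> bool) \<Rightarrow> bool" where
  "chordal V E \<longleftrightarrow> \<not> (\<exists>n f. n \<ge> 4 \<and> induced_cycle V E n f)"

definition union_adj :: "'a set set \<Rightarrow> 'a \<Rightarrow> 'a \<Rightarrow> bool" where
  "union_adj \<L> u v \<longleftrightarrow> u \<noteq> v \<and> (\<exists>L\<in>\<L>. u \<in> L \<and> v \<in> L)"

end

theory Submission
  imports Defs Complex_Main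
begin

text \<open>Let C be a clique contained in no member of \<open>\<L>\<close>. Any two vertices of C lie in a common
  member, and two members share at most one vertex, so the traces \<open>L \<inter> C\<close> with at least two
  points form a linear space on C. By the de Bruijn-Erdos theorem it has at least \<open>card C\<close>
  lines, hence \<open>card C \<le> card \<L> = k\<close>. If C is a maximal clique of size k outside \<open>\<L>\<close>, equality
  holds, so every member meets C in a line and any two lines of this extremal space intersect:
  two members therefore share only a vertex of C. Every vertex outside C thus lies in a single
  member and is simplicial, while an induced cycle of length at least 4 has non-adjacent
  vertices f 0 and f 2 that are not simplicial and would both have to lie in C.\<close>

lemma one_div_mult_diff_le_iff:
  fixes b v t r :: real
  assumes "0 < b" "0 < v" "t < v" "r < b"
  shows "1 / (b * (v - t)) \<le> 1 / (v * (b - r)) \<longleftrightarrow> b * t \<le> v * r"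
    and one_div_mult_diff_less_iff: "1 / (b * (v - t)) < 1 / (v * (b - r)) \<longleftrightarrow> b * t < v * r"
proof -
  have "0 < b * (v - t)" "0 < v * (b - r)" using assms by simp_all
  then show "1 / (b * (v - t)) \<le> 1 / (v * (b - r)) \<longleftrightarrow> b * t \<le> v * r"
    and "1 / (b * (v - t)) < 1 / (v * (b - r)) \<longleftrightarrow> b * t < v * r"
    by (simp_all add: divide_le_eq divide_less_eq algebra_simps)
qed

locale linear_space =
  fixes P :: "'a set" and B :: "'a set set"
  assumes finite_points: "finite P"
    and line_subset: "T \<in> B \<Longrightarrow> T \<subseteq> P"
    and pair_on_line: "\<lbrakk>x \<in> P; y \<in> P; x \<noteq> y\<rbrakk> \<Longrightarrow> \<exists>T\<in>B. x \<in> T \<and> y \<in> T"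
    and card_lines_inter: "\<lbrakk>T1 \<in> B; T2 \<in> B; T1 \<noteq> T2\<rbrakk> \<Longrightarrow> card (T1 \<inter> T2) \<le> 1"
begin

definition lines_through :: "'a \<Rightarrow> 'a set set" where
  "lines_through p = {T\<in>B. p \<in> T}"

lemma finite_lines: "finite B"
  using finite_points line_subset by (meson Pow_iff finite_Pow_iff finite_subset subsetI)

lemma finite_line: "T \<in> B \<Longrightarrow> finite T"
  using finite_points line_subset finite_subset by blast

lemma line_unique:
  assumes "T1 \<in> B" "T2 \<in> B" "x \<in> T1 \<inter> T2" "y \<in> T1 \<inter> T2" "x \<noteq> y"
  shows "T1 = T2"
proof (rule ccontr)
  assume "T1 \<noteq> T2"
  have "card {x, y} \<le> card (T1 \<inter> T2)"
    using assms by (intro card_mono) (auto simp: finite_line)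
  with card_lines_inter[OF assms(1,2) \<open>T1 \<noteq> T2\<close>] \<open>x \<noteq> y\<close> show False by simp
qed

lemma card_line_add_card_parallels_le:
  assumes "p \<in> P" "T \<in> B" "p \<notin> T"
  shows "card T + card {T'\<in>lines_through p. T' \<inter> T = {}} \<le> card (lines_through p)"
proof -
  define join where "join q = (SOME T'. T' \<in> B \<and> p \<in> T' \<and> q \<in> T')" for q
  have join: "join q \<in> lines_through p \<and> q \<in> join q" if "q \<in> T" for q
  proof -
    have "\<exists>T'. T' \<in> B \<and> p \<in> T' \<and> q \<in> T'"
      using pair_on_line[of p q] line_subset assms that by blast
    from someI_ex[OF this] show ?thesis unfolding join_def lines_through_def by auto
  qed
  have "inj_on join T"
  proof (rule inj_onI)
    fix q q' assume q: "q \<in> T" "q' \<in> T" "join q = join q'"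
    show "q = q'"
    proof (rule ccontr)
      assume "q \<noteq> q'"
      then have "join q = T"
        using line_unique[of "join q" T q q'] join[OF q(1)] join[OF q(2)] q assms(2)
        unfolding lines_through_def by auto
      then show False using join[OF q(1)] assms(3) unfolding lines_through_def by auto
    qed
  qed
  moreover have "join ` T \<subseteq> {T'\<in>lines_through p. T' \<inter> T \<noteq> {}}"
    using join by auto
  moreover have fin: "finite (lines_through p)"
    using finite_lines unfolding lines_through_def by simp
  ultimately have "card T \<le> card {T'\<in>lines_through p. T' \<inter> T \<noteq> {}}"
    by (intro card_inj_on_le) auto
  moreover have "card (lines_through p) =
      card {T'\<in>lines_through p. T' \<inter> T \<noteq> {}} + card {T'\<in>lines_through p. T' \<inter> T = {}}"
    using fin by (subst card_Un_disjoint[symmetric]) (auto intro: arg_cong[where f = card])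
  ultimately show ?thesis by linarith
qed

lemma card_line_le_card_lines_through:
  "\<lbrakk>p \<in> P; T \<in> B; p \<notin> T\<rbrakk> \<Longrightarrow> card T \<le> card (lines_through p)"
  using card_line_add_card_parallels_le by fastforce

end

locale nontrivial_linear_space = linear_space +
  assumes points_not_line: "P \<notin> B"
    and two_le_card_points: "2 \<le> card P"
begin

lemma exists_other_point:
  assumes "p \<in> P" shows "\<exists>q\<in>P. q \<noteq> p"
proof (rule ccontr)
  assume "\<not> ?thesis"
  then have "card P \<le> card {p}" using finite_points by (intro card_mono) auto
  with two_le_card_points show False by simp
qed

lemma card_lines_through_pos:
  assumes "p \<in> P" shows "0 < card (lines_through p)"
proof -
  obtain q where "q \<in> P" "q \<noteq> p" using exists_other_point assms by blast
  then obtain T where "T \<in> lines_through p"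
    using pair_on_line assms unfolding lines_through_def by blast
  then show ?thesis using finite_lines card_gt_0_iff unfolding lines_through_def by fastforce
qed

lemma line_avoiding_point:
  assumes "p \<in> P" shows "\<exists>T\<in>B. p \<notin> T"
proof (rule ccontr)
  assume all: "\<not> ?thesis"
  obtain q where q: "q \<in> P" "q \<noteq> p" using exists_other_point assms by blast
  obtain T1 where T1: "T1 \<in> B" "p \<in> T1" "q \<in> T1" using pair_on_line q assms by metis
  have "T1 \<noteq> P" using points_not_line T1(1) by blast
  then obtain x where x: "x \<in> P" "x \<notin> T1" using line_subset[OF T1(1)] by blast
  then obtain T2 where T2: "T2 \<in> B" "q \<in> T2" "x \<in> T2" using pair_on_line q T1(3) by metis
  have "T1 = T2" using line_unique[of T1 T2 p q] T1 T2 all q by auto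
  with x T2 show False by simp
qed

lemma card_line_less: "T \<in> B \<Longrightarrow> card T < card P"
  using line_subset points_not_line finite_points by (metis psubsetI psubset_card_mono)

lemma card_lines_through_less:
  assumes "p \<in> P" shows "card (lines_through p) < card B"
proof -
  have "lines_through p \<subset> B"
    using line_avoiding_point[OF assms] unfolding lines_through_def by auto
  then show ?thesis using finite_lines psubset_card_mono by blast
qed

lemma card_lines_pos: "0 < card B"
proof -
  obtain p where "p \<in> P" using two_le_card_points by fastforce
  then show ?thesis using card_lines_through_less by fastforce
qed

definition antiflags :: "('a \<times> 'a set) set" where
  "antiflags = Sigma P (\<lambda>p. {T\<in>B. p \<notin> T})"

definition line_weight :: "'a \<times> 'a set \<Rightarrow> real" where
  "line_weight = (\<lambda>(p, T). 1 / (real (card B) * (real (card P) - real (card T))))"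

definition point_weight :: "'a \<times> 'a set \<Rightarrow> real" where
  "point_weight = (\<lambda>(p, T). 1 / (real (card P) * (real (card B) - real (card (lines_through p)))))"

lemma sum_line_weight_antiflags: "sum line_weight antiflags = 1"
proof -
  have "sum line_weight antiflags =
      (\<Sum>T\<in>B. \<Sum>p\<in>{p\<in>P. p \<notin> T}. 1 / (real (card B) * (real (card P) - real (card T))))"
    unfolding line_weight_def antiflags_def
    using finite_points finite_lines by (simp add: sum.Sigma[symmetric] sum.swap_restrict)
  also have "\<dots> = (\<Sum>T\<in>B. 1 / real (card B))"
  proof (rule sum.cong[OF refl])
    fix T assume T: "T \<in> B"
    have "{p\<in>P. p \<notin> T} = P - T" by auto
    then have "card {p\<in>P. p \<notin> T} = card P - card T"
      using T line_subset finite_line by (simp add: card_Diff_subset)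
    then show "(\<Sum>p\<in>{p\<in>P. p \<notin> T}. 1 / (real (card B) * (real (card P) - real (card T)))) =
        1 / real (card B)"
      using card_line_less[OF T] by (simp add: of_nat_diff)
  qed
  also have "\<dots> = 1" using card_lines_pos by simp
  finally show ?thesis .
qed

lemma sum_point_weight_antiflags: "sum point_weight antiflags = 1"
proof -
  have "sum point_weight antiflags =
      (\<Sum>p\<in>P. \<Sum>T\<in>{T\<in>B. p \<notin> T}. 1 / (real (card P) * (real (card B) - real (card (lines_through p)))))"
    unfolding point_weight_def antiflags_def
    using finite_points finite_lines by (simp add: sum.Sigma[symmetric])
  also have "\<dots> = (\<Sum>p\<in>P. 1 / real (card P))"
  proof (rule sum.cong[OF refl])
    fix p assume p: "p \<in> P"
    have "{T\<in>B. p \<notin> T} = B - lines_through p" unfolding lines_through_def by auto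
    then have "card {T\<in>B. p \<notin> T} = card B - card (lines_through p)"
      using finite_lines by (simp add: card_Diff_subset lines_through_def)
    then show "(\<Sum>T\<in>{T\<in>B. p \<notin> T}. 1 / (real (card P) * (real (card B) - real (card (lines_through p))))) =
        1 / real (card P)"
      using card_lines_through_less[OF p] by (simp add: of_nat_diff)
  qed
  also have "\<dots> = 1" using two_le_card_points by simp
  finally show ?thesis .
qed

lemma line_weight_le_point_weight_iff:
  assumes "(p, T) \<in> antiflags"
  shows "line_weight (p, T) \<le> point_weight (p, T) \<longleftrightarrow> card B * card T \<le> card P * card (lines_through p)"
    and line_weight_less_point_weight_iff:
      "line_weight (p, T) < point_weight (p, T) \<longleftrightarrow> card B * card T < card P * card (lines_through p)"
proof -
  have bounds: "0 < real (card B)" "0 < real (card P)"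
      "real (card T) < real (card P)" "real (card (lines_through p)) < real (card B)"
    using assms card_lines_pos two_le_card_points card_line_less card_lines_through_less
    unfolding antiflags_def by auto
  show "line_weight (p, T) \<le> point_weight (p, T) \<longleftrightarrow> card B * card T \<le> card P * card (lines_through p)"
    using one_div_mult_diff_le_iff[OF bounds] unfolding line_weight_def point_weight_def
    by (simp flip: of_nat_mult)
  show "line_weight (p, T) < point_weight (p, T) \<longleftrightarrow> card B * card T < card P * card (lines_through p)"
    using one_div_mult_diff_less_iff[OF bounds] unfolding line_weight_def point_weight_def
    by (simp flip: of_nat_mult)
qed

text \<open>Both weightings give the antiflags total mass 1, and \<open>card B \<le> card P\<close> together with
  \<open>card T \<le> card (lines_through p)\<close> makes the first pointwise at most the second; so the two
  weights coincide on every antiflag.\<close>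

lemma card_lines_mult_card_line_eq:
  assumes "card B \<le> card P" and antiflag: "p \<in> P" "T \<in> B" "p \<notin> T"
  shows "card B * card T = card P * card (lines_through p)"
proof (rule ccontr)
  have le: "line_weight x \<le> point_weight x" if x: "x \<in> antiflags" for x
  proof -
    obtain q S where qS: "x = (q, S)" "q \<in> P" "S \<in> B" "q \<notin> S"
      using x unfolding antiflags_def by blast
    then have "card B * card S \<le> card P * card (lines_through q)"
      using card_line_le_card_lines_through assms(1) by (auto intro: mult_le_mono)
    then show ?thesis using line_weight_le_point_weight_iff x unfolding qS(1) by blast
  qed
  have pT: "(p, T) \<in> antiflags" using antiflag unfolding antiflags_def by simp
  assume "card B * card T \<noteq> card P * card (lines_through p)"
  then have "card B * card T < card P * card (lines_through p)"
    using card_line_le_card_lines_through[OF antiflag] assms(1) by (meson mult_le_mono order_le_neq_trans)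
  then have "line_weight (p, T) < point_weight (p, T)"
    using line_weight_less_point_weight_iff[OF pT] by blast
  moreover have "finite antiflags" unfolding antiflags_def using finite_points finite_lines by simp
  ultimately have "sum line_weight antiflags < sum point_weight antiflags"
    using le pT by (intro sum_strict_mono_ex1) auto
  then show False using sum_line_weight_antiflags sum_point_weight_antiflags by simp
qed

theorem de_bruijn_erdos: "card P \<le> card B"
proof (rule ccontr)
  assume "\<not> card P \<le> card B"
  then have less: "card B < card P" by simp
  obtain p where p: "p \<in> P" using two_le_card_points by fastforce
  then obtain T where T: "T \<in> B" "p \<notin> T" using line_avoiding_point by blast
  have "card B * card T \<le> card B * card (lines_through p)"
    using card_line_le_card_lines_through[OF p T] by simp
  also have "\<dots> < card P * card (lines_through p)"
    using less card_lines_through_pos[OF p] by simp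
  finally show False using card_lines_mult_card_line_eq[OF _ p T] less by simp
qed

lemma card_lines_through_eq_card_line:
  assumes "card B = card P" "p \<in> P" "T \<in> B" "p \<notin> T"
  shows "card (lines_through p) = card T"
  using card_lines_mult_card_line_eq[OF _ assms(2-4)] assms(1) card_lines_pos by simp

lemma lines_meet_if_card_lines_eq:
  assumes "card B = card P" "T1 \<in> B" "T2 \<in> B" "T2 \<noteq> {}"
  shows "T1 \<inter> T2 \<noteq> {}"
proof
  assume disjoint: "T1 \<inter> T2 = {}"
  obtain p where p: "p \<in> T2" using assms(4) by blast
  then have "p \<in> P" "p \<notin> T1" using line_subset assms(3) disjoint by auto
  then have "card {T\<in>lines_through p. T \<inter> T1 = {}} = 0"
    using card_line_add_card_parallels_le card_lines_through_eq_card_line assms(1,2) by fastforce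
  moreover have "T2 \<in> {T\<in>lines_through p. T \<inter> T1 = {}}"
    using assms(3) p disjoint unfolding lines_through_def by auto
  moreover have "finite {T\<in>lines_through p. T \<inter> T1 = {}}"
    using finite_lines unfolding lines_through_def by simp
  ultimately show False by auto
qed

end

definition trace_lines :: "'a set set \<Rightarrow> 'a set \<Rightarrow> 'a set set" where
  "trace_lines \<L> C = (\<lambda>L. L \<inter> C) ` {L\<in>\<L>. 2 \<le> card (L \<inter> C)}"

lemma card_trace_lines_le: "finite \<L> \<Longrightarrow> card (trace_lines \<L> C) \<le> card {L\<in>\<L>. 2 \<le> card (L \<inter> C)}"
  unfolding trace_lines_def by (intro card_image_le) simp

lemma finite_clique_union:
  "\<lbrakk>finite \<L>; \<forall>L\<in>\<L>. finite L; is_clique (\<Union>\<L>) E C\<rbrakk> \<Longrightarrow> finite C"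
  unfolding is_clique_def by (meson finite_Union finite_subset)

lemma member_is_clique: "L \<in> \<L> \<Longrightarrow> is_clique (\<Union>\<L>) (union_adj \<L>) L"
  unfolding is_clique_def union_adj_def by blast

lemma nontrivial_linear_space_trace_lines:
  assumes finite_members: "\<forall>L\<in>\<L>. finite L"
    and meet: "\<forall>L1\<in>\<L>. \<forall>L2\<in>\<L>. L1 \<noteq> L2 \<longrightarrow> card (L1 \<inter> L2) \<le> 1"
    and clique: "is_clique (\<Union>\<L>) (union_adj \<L>) C" and "finite C"
    and not_in_member: "\<forall>L\<in>\<L>. \<not> C \<subseteq> L" and "2 \<le> card C"
  shows "nontrivial_linear_space C (trace_lines \<L> C)"
proof unfold_locales
  show "finite C" "2 \<le> card C" by fact+
  show "T \<subseteq> C" if "T \<in> trace_lines \<L> C" for T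
    using that unfolding trace_lines_def by auto
  show "C \<notin> trace_lines \<L> C"
    using not_in_member unfolding trace_lines_def by auto
  show "\<exists>T\<in>trace_lines \<L> C. x \<in> T \<and> y \<in> T" if xy: "x \<in> C" "y \<in> C" "x \<noteq> y" for x y
  proof -
    obtain L where L: "L \<in> \<L>" "x \<in> L" "y \<in> L"
      using clique xy unfolding is_clique_def union_adj_def by blast
    have "card {x, y} \<le> card (L \<inter> C)"
      using L xy \<open>finite C\<close> by (intro card_mono) auto
    with L xy show ?thesis unfolding trace_lines_def by auto
  qed
  show "card (T1 \<inter> T2) \<le> 1"
    if T: "T1 \<in> trace_lines \<L> C" "T2 \<in> trace_lines \<L> C" "T1 \<noteq> T2" for T1 T2
  proof -
    obtain L1 L2 where L: "L1 \<in> \<L>" "L2 \<in> \<L>" "T1 = L1 \<inter> C" "T2 = L2 \<inter> C"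
      using T(1,2) unfolding trace_lines_def by auto
    have "card (T1 \<inter> T2) \<le> card (L1 \<inter> L2)"
      using L finite_members by (intro card_mono) auto
    also have "\<dots> \<le> 1" using meet L T(3) by blast
    finally show ?thesis .
  qed
qed

lemma two_le_card_clique_not_in_member:
  assumes clique: "is_clique (\<Union>\<L>) (union_adj \<L>) C" and "finite C" "C \<noteq> {}"
    and not_in_member: "\<forall>L\<in>\<L>. \<not> C \<subseteq> L"
  shows "2 \<le> card C"
proof (rule ccontr)
  assume "\<not> 2 \<le> card C"
  then have "card C = 1" using \<open>finite C\<close> \<open>C \<noteq> {}\<close> by (simp add: card_gt_0_iff Suc_leI le_antisym)
  then obtain x where "C = {x}" by (rule card_1_singletonE)
  then show False using clique not_in_member unfolding is_clique_def by auto
qed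

lemma card_clique_le_card_members:
  assumes "finite \<L>" and finite_members: "\<forall>L\<in>\<L>. finite L"
    and meet: "\<forall>L1\<in>\<L>. \<forall>L2\<in>\<L>. L1 \<noteq> L2 \<longrightarrow> card (L1 \<inter> L2) \<le> 1"
    and clique: "is_clique (\<Union>\<L>) (union_adj \<L>) C"
    and not_in_member: "\<forall>L\<in>\<L>. \<not> C \<subseteq> L"
  shows "card C \<le> card \<L>"
proof (cases "C = {}")
  case False
  have "finite C" using finite_clique_union assms by blast
  then have "2 \<le> card C" using two_le_card_clique_not_in_member clique False not_in_member by blast
  then interpret nontrivial_linear_space C "trace_lines \<L> C"
    using nontrivial_linear_space_trace_lines \<open>finite C\<close> assms by blast
  have "card C \<le> card (trace_lines \<L> C)" by (rule de_bruijn_erdos)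
  also have "\<dots> \<le> card {L\<in>\<L>. 2 \<le> card (L \<inter> C)}" using card_trace_lines_le \<open>finite \<L>\<close> .
  also have "\<dots> \<le> card \<L>" using \<open>finite \<L>\<close> by (intro card_mono) auto
  finally show ?thesis .
qed simp

lemma members_meet_inside_clique:
  assumes "finite \<L>" and finite_members: "\<forall>L\<in>\<L>. finite L"
    and meet: "\<forall>L1\<in>\<L>. \<forall>L2\<in>\<L>. L1 \<noteq> L2 \<longrightarrow> card (L1 \<inter> L2) \<le> 1"
    and clique: "is_clique (\<Union>\<L>) (union_adj \<L>) C"
    and not_in_member: "\<forall>L\<in>\<L>. \<not> C \<subseteq> L" and "2 \<le> card C" and "card C = card \<L>"
    and L12: "L1 \<in> \<L>" "L2 \<in> \<L>" "L1 \<noteq> L2"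
  shows "L1 \<inter> L2 \<subseteq> C"
proof -
  interpret nontrivial_linear_space C "trace_lines \<L> C"
    using nontrivial_linear_space_trace_lines finite_clique_union assms by blast
  have "card \<L> \<le> card (trace_lines \<L> C)" using de_bruijn_erdos \<open>card C = card \<L>\<close> by simp
  also have "\<dots> \<le> card {L\<in>\<L>. 2 \<le> card (L \<inter> C)}" using card_trace_lines_le \<open>finite \<L>\<close> .
  moreover have "card {L\<in>\<L>. 2 \<le> card (L \<inter> C)} \<le> card \<L>"
    using \<open>finite \<L>\<close> by (intro card_mono) auto
  ultimately have "{L\<in>\<L>. 2 \<le> card (L \<inter> C)} = \<L>"
    using \<open>finite \<L>\<close> by (intro card_subset_eq) auto
  then have traces: "L1 \<inter> C \<in> trace_lines \<L> C" "L2 \<inter> C \<in> trace_lines \<L> C"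
    using L12 unfolding trace_lines_def by blast+
  moreover have "card (trace_lines \<L> C) = card C"
    using de_bruijn_erdos card_trace_lines_le[OF \<open>finite \<L>\<close>, of C] \<open>card C = card \<L>\<close>
      card_mono[OF \<open>finite \<L>\<close>, of "{L\<in>\<L>. 2 \<le> card (L \<inter> C)}"] by auto
  moreover have "L2 \<inter> C \<noteq> {}" using traces(2) \<open>2 \<le> card C\<close> unfolding trace_lines_def by force
  ultimately obtain y where y: "y \<in> L1 \<inter> L2" "y \<in> C"
    using lines_meet_if_card_lines_eq by blast
  show ?thesis
  proof
    fix x assume x: "x \<in> L1 \<inter> L2"
    have "card {x, y} \<le> card (L1 \<inter> L2)"
      using x y L12 finite_members by (intro card_mono) auto
    moreover have "card (L1 \<inter> L2) \<le> 1" using meet L12 by blast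
    ultimately have "x = y" by (cases "x = y") auto
    then show "x \<in> C" using y by simp
  qed
qed

definition simplicial :: "'a set \<Rightarrow> ('a \<Rightarrow> 'a \<Rightarrow> bool) \<Rightarrow> 'a \<Rightarrow> bool" where
  "simplicial V E v \<longleftrightarrow> (\<forall>a\<in>V. \<forall>b\<in>V. E v a \<longrightarrow> E v b \<longrightarrow> a \<noteq> b \<longrightarrow> E a b)"

lemma simplicial_if_in_single_member:
  assumes "\<forall>L1\<in>\<L>. \<forall>L2\<in>\<L>. L1 \<noteq> L2 \<longrightarrow> v \<notin> L1 \<inter> L2"
  shows "simplicial (\<Union>\<L>) (union_adj \<L>) v"
  using assms unfolding simplicial_def union_adj_def by blast

lemma chordal_if_simplicial_outside_clique:
  assumes clique: "is_clique V E C" and simplicial: "\<forall>v\<in>V - C. simplicial V E v"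
  shows "chordal V E"
  unfolding chordal_def
proof (intro notI, elim exE conjE)
  fix n f assume "4 \<le> n" and cycle: "induced_cycle V E n f"
  then have adj: "E (f i) (f j) \<longleftrightarrow> j = Suc i mod n \<or> i = Suc j mod n"
    if "i < n" "j < n" "i \<noteq> j" for i j
    using that unfolding induced_cycle_def by blast
  have in_clique: "f i \<in> C"
    if "i < n" "a < n" "b < n" "E (f i) (f a)" "E (f i) (f b)" "a \<noteq> b" "\<not> E (f a) (f b)" for i a b
  proof (rule ccontr)
    assume "f i \<notin> C"
    moreover have "f i \<in> V" "f a \<in> V" "f b \<in> V" "f a \<noteq> f b"
      using cycle that unfolding induced_cycle_def by (auto dest: inj_onD)
    ultimately show False using simplicial that unfolding simplicial_def by blast
  qed
  have mod_n: "Suc 0 mod n = 1" "Suc 1 mod n = 2" "Suc 2 mod n = 3" "Suc (n - 1) mod n = 0"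
    using \<open>4 \<le> n\<close> by auto
  have "Suc 3 mod n \<noteq> 1"
    using \<open>4 \<le> n\<close> by (cases "n = 4") auto
  have "f 0 \<in> C" using in_clique[of 0 1 "n - 1"] adj \<open>4 \<le> n\<close> mod_n by simp
  moreover have "f 2 \<in> C"
    using in_clique[of 2 1 3] adj \<open>4 \<le> n\<close> mod_n \<open>Suc 3 mod n \<noteq> 1\<close> by simp
  moreover have "f 0 \<noteq> f 2" using cycle \<open>4 \<le> n\<close> unfolding induced_cycle_def by (auto dest: inj_onD)
  ultimately have "E (f 0) (f 2)" using clique unfolding is_clique_def by blast
  then show False using adj[of 0 2] \<open>4 \<le> n\<close> mod_n by simp
qed

lemma chordal_if_extremal_clique:
  assumes "finite \<L>" and finite_members: "\<forall>L\<in>\<L>. finite L"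
    and meet: "\<forall>L1\<in>\<L>. \<forall>L2\<in>\<L>. L1 \<noteq> L2 \<longrightarrow> card (L1 \<inter> L2) \<le> 1"
    and clique: "is_clique (\<Union>\<L>) (union_adj \<L>) C"
    and not_in_member: "\<forall>L\<in>\<L>. \<not> C \<subseteq> L" and "C \<noteq> {}" and "card C = card \<L>"
  shows "chordal (\<Union>\<L>) (union_adj \<L>)"
proof -
  have "finite C" using finite_clique_union assms by blast
  then have "2 \<le> card C" using two_le_card_clique_not_in_member clique \<open>C \<noteq> {}\<close> not_in_member by blast
  then have "L1 \<inter> L2 \<subseteq> C" if "L1 \<in> \<L>" "L2 \<in> \<L>" "L1 \<noteq> L2" for L1 L2
    using members_meet_inside_clique[OF assms(1-5)] \<open>card C = card \<L>\<close> that by blast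
  then have "\<forall>v\<in>\<Union>\<L> - C. simplicial (\<Union>\<L>) (union_adj \<L>) v"
    by (intro ballI simplicial_if_in_single_member) blast
  then show ?thesis by (rule chordal_if_simplicial_outside_clique[OF clique])
qed

lemma clique_number_eqI:
  assumes "finite V" "is_clique V E C" "\<And>D. is_clique V E D \<Longrightarrow> card D \<le> card C"
  shows "clique_number V E = card C"
  unfolding clique_number_def
proof (rule Max_eqI)
  have "{D. is_clique V E D} \<subseteq> Pow V" unfolding is_clique_def by auto
  then show "finite (card ` {D. is_clique V E D})"
    using \<open>finite V\<close> by (meson finite_Pow_iff finite_imageI finite_subset)
qed (use assms in auto)

theorem lemma3p4:
  fixes \<L> :: "'a set set" and k :: nat
  assumes "k > 0"
    and "finite \<L>" and "card \<L> = k"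
    and "\<forall>L\<in>\<L>. finite L \<and> card L = k"
    and "\<forall>L1\<in>\<L>. \<forall>L2\<in>\<L>. L1 \<noteq> L2 \<longrightarrow> card (L1 \<inter> L2) \<le> 1"
  shows "clique_number (\<Union>\<L>) (union_adj \<L>) = k \<and>
         ((\<exists>C. is_maximal_clique (\<Union>\<L>) (union_adj \<L>) C \<and> card C = k \<and> C \<notin> \<L>)
           \<longrightarrow> chordal (\<Union>\<L>) (union_adj \<L>))"
proof
  have finite_members: "\<forall>L\<in>\<L>. finite L" using assms(4) by blast
  have card_clique_le: "card C \<le> k" if clique: "is_clique (\<Union>\<L>) (union_adj \<L>) C" for C
  proof (cases "\<exists>L\<in>\<L>. C \<subseteq> L")
    case True
    then show ?thesis using assms(4) card_mono by metis
  next
    case False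
    then show ?thesis
      using card_clique_le_card_members[OF assms(2) finite_members assms(5) clique] assms(3) by blast
  qed
  obtain L where "L \<in> \<L>" using assms(1,3) by fastforce
  then show "clique_number (\<Union>\<L>) (union_adj \<L>) = k"
    using clique_number_eqI[OF _ member_is_clique] card_clique_le assms(2,4) by (metis finite_Union)
  show "(\<exists>C. is_maximal_clique (\<Union>\<L>) (union_adj \<L>) C \<and> card C = k \<and> C \<notin> \<L>)
    \<longrightarrow> chordal (\<Union>\<L>) (union_adj \<L>)"
  proof (intro impI, elim exE conjE)
    fix C assume max: "is_maximal_clique (\<Union>\<L>) (union_adj \<L>) C" and "card C = k" "C \<notin> \<L>"
    then have "C \<noteq> {}" using assms(1) by auto
    have clique: "is_clique (\<Union>\<L>) (union_adj \<L>) C"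
      using max unfolding is_maximal_clique_def by blast
    have "\<forall>L\<in>\<L>. \<not> C \<subseteq> L"
      using max member_is_clique \<open>C \<notin> \<L>\<close> unfolding is_maximal_clique_def by blast
    then show "chordal (\<Union>\<L>) (union_adj \<L>)"
      using chordal_if_extremal_clique[OF assms(2) finite_members assms(5) clique _ \<open>C \<noteq> {}\<close>]
        \<open>card C = k\<close> assms(3) by simp
  qed
qed

end
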